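(* Let $V$ be a finite set of points in $\mathbb{R}^m$ such that the Euclidean distance $d(x,y)=\|x-y\|_2$ restricted to $V$ is an ultrametric, and let $T$ be a generating tree for $V$. Then every pair $\{i,j\}\subseteq V$ obtains revenue $rev(i,j)=1$ in $T$; in particular $rev_T(V)=\binom{|V|}{2}$ and $T$ maximizes the Hierarchical-Revenue objective over all hierarchical clustering trees on $V$.
   Context: A metric is an ultrametric if $d(x,y)\le\max\{d(x,z),d(y,z)\}$ for all $x,y,z$. A generating tree for $V$ is a rooted binary tree $T$ with $|V|$ leaves in bijection with $V$ and $|V|-1$ internal nodes (set $\mathcal N$), with a weight function $W:\mathcal N\to\mathbb{R}_{\ge0}$ such that (i) whenever $N_1$ lies on the path from $N_2$ to the root, $W(N_1)\ge W(N_2)$, and (ii) $d(x,y)=W(\mathrm{LCA}_T(x,y))$ for all distinct $x,y\in V$. A hierarchical clustering tree on $V$ is a rooted binary tree whose leaves are in bijection with $V$; each node is identified with the set of points at the leaves of its subtree, and an internal node with set $S$ whose children have sets $S_1,S_2$ gives the split $S\to(S_1,S_2)$. $\rho(S)=\frac1{|S|}\sum_{u\in S}u$. For a split $S\to(S_1,S_2)$ and $i\in S_1,j\in S_2$, $rev(i,j)=\min\{d(i,j)/\max\{d(i,\rho(S_1)),d(j,\rho(S_2))\},1\}$ (equal to $1$ if the maximum is $0$); for a pair $\{i,j\}$ this is evaluated at the split where $i,j$ are first separated, and $rev_T(V)=\sum_{\{i,j\}\subseteq V}rev(i,j)$. *)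

theory Defs
  imports "HOL-Analysis.Analysis"
begin

text \<open>Points live in an arbitrary Euclidean space 'a (i.e. R^m for some m);
  dist is the Euclidean distance.\<close>

definition ultrametric_on :: "'a::metric_space set \<Rightarrow> bool" where
  "ultrametric_on V \<longleftrightarrow>
     (\<forall>x\<in>V. \<forall>y\<in>V. \<forall>z\<in>V. dist x y \<le> max (dist x z) (dist y z))"

datatype 'a htree = Leaf 'a | Node "'a htree" "'a htree"

fun leaves :: "'a htree \<Rightarrow> 'a list" where
  "leaves (Leaf x) = [x]"
| "leaves (Node l r) = leaves l @ leaves r"

definition hc_tree :: "'a set \<Rightarrow> 'a htree \<Rightarrow> bool" where
  "hc_tree V T \<longleftrightarrow> distinct (leaves T) \<and> set (leaves T) = V"

datatype 'a wtree = WLeaf 'a | WNode real "'a wtree" "'a wtree"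

fun forget :: "'a wtree \<Rightarrow> 'a htree" where
  "forget (WLeaf x) = Leaf x"
| "forget (WNode w l r) = Node (forget l) (forget r)"

text \<open>Weight of an internal node; for a leaf child we return 0, which is harmless
  since the monotonicity condition only concerns internal nodes and weights are \<ge> 0.\<close>
fun wt :: "'a wtree \<Rightarrow> real" where
  "wt (WLeaf x) = 0"
| "wt (WNode w l r) = w"

text \<open>Weights nonnegative, monotone towards the root (stated for parent/child pairs,
  hence along all root paths by transitivity), and d(x,y) equals the weight of the
  LCA of x and y: the LCA of x in the left subtree and y in the right subtree of a node
  is exactly that node.\<close>
fun gen_ok :: "'a::metric_space wtree \<Rightarrow> bool" where
  "gen_ok (WLeaf x) = True"
| "gen_ok (WNode w l r) \<longleftrightarrow> w \<ge> 0 \<and> wt l \<le> w \<and> wt r \<le> w \<and> gen_ok l \<and> gen_ok r \<and>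
      (\<forall>x\<in>set (leaves (forget l)). \<forall>y\<in>set (leaves (forget r)). dist x y = w)"

definition generating_tree :: "'a::metric_space set \<Rightarrow> 'a wtree \<Rightarrow> bool" where
  "generating_tree V T \<longleftrightarrow> hc_tree V (forget T) \<and> gen_ok T"

definition centroid :: "'a::real_vector set \<Rightarrow> 'a" where
  "centroid S = (1 / real (card S)) *\<^sub>R (\<Sum>u\<in>S. u)"

definition rev_split :: "'a::euclidean_space set \<Rightarrow> 'a set \<Rightarrow> 'a \<Rightarrow> 'a \<Rightarrow> real" where
  "rev_split S1 S2 i j =
     (let M = max (dist i (centroid S1)) (dist j (centroid S2))
      in if M = 0 then 1 else min (dist i j / M) 1)"

fun pair_rev :: "'a::euclidean_space htree \<Rightarrow> 'a set \<Rightarrow> real" where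
  "pair_rev (Leaf x) p = 0"
| "pair_rev (Node l r) p =
     (if p \<subseteq> set (leaves l) then pair_rev l p
      else if p \<subseteq> set (leaves r) then pair_rev r p
      else rev_split (set (leaves l)) (set (leaves r))
             (THE i. i \<in> p \<inter> set (leaves l)) (THE j. j \<in> p \<inter> set (leaves r)))"

definition revenue :: "'a::euclidean_space htree \<Rightarrow> real" where
  "revenue T = (\<Sum>p\<in>{p. p \<subseteq> set (leaves T) \<and> card p = 2}. pair_rev T p)"

end

theory Submission
  imports Defs
begin

text \<open>In a generating tree every leaf below a node lies within distance the node's weight of
  every other leaf below it, so the centroid of a subtree, being an average of such leaves,
  is no farther from any of its leaves than the weight of its parent node. At the split
  that separates i and j the denominator of the revenue is therefore at most d(i,j), which
  is exactly that weight, and every pair earns the maximal revenue 1.\<close>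

lemma dist_le_wt_if_gen_ok:
  assumes "gen_ok T" "x \<in> set (leaves (forget T))" "y \<in> set (leaves (forget T))"
  shows "dist x y \<le> wt T"
  using assms
proof (induction T arbitrary: x y)
  case (WLeaf z)
  then show ?case by simp
next
  case (WNode w l r)
  let ?L = "set (leaves (forget l))" and ?R = "set (leaves (forget r))"
  have "dist x y \<le> w" if "x \<in> ?L" "y \<in> ?L"
    using WNode.IH(1)[of x y] WNode.prems(1) that by simp
  moreover have "dist x y \<le> w" if "x \<in> ?R" "y \<in> ?R"
    using WNode.IH(2)[of x y] WNode.prems(1) that by simp
  moreover have "dist x y = w" if "x \<in> ?L" "y \<in> ?R"
    using WNode.prems(1) that by simp
  moreover have "dist x y = w" if "x \<in> ?R" "y \<in> ?L"
    using WNode.prems(1) that dist_commute[of x y] by simp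
  ultimately show ?case
    using WNode.prems(2,3) by (auto simp del: gen_ok.simps)
qed

lemma dist_centroid_le:
  fixes S :: "'a::real_normed_vector set"
  assumes "finite S" "S \<noteq> {}" "\<And>u. u \<in> S \<Longrightarrow> dist x u \<le> r"
  shows "dist x (centroid S) \<le> r"
proof -
  have "card S > 0"
    using assms(1,2) by (simp add: card_gt_0_iff)
  then have "(\<Sum>u\<in>S. (1 / real (card S)) *\<^sub>R u) \<in> cball x r"
    using assms by (intro convex_sum) auto
  then show ?thesis
    by (simp add: centroid_def scaleR_sum_right)
qed

lemma rev_split_eq_1:
  assumes "max (dist i (centroid S1)) (dist j (centroid S2)) \<le> dist i j"
  shows "rev_split S1 S2 i j = 1"
proof -
  let ?M = "max (dist i (centroid S1)) (dist j (centroid S2))"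
  have "?M \<ge> 0"
    by (simp add: le_max_iff_disj)
  then have "?M = 0 \<or> dist i j / ?M \<ge> 1"
    using assms le_divide_eq_1_pos[of ?M "dist i j"] by linarith
  then show ?thesis
    by (auto simp: rev_split_def Let_def)
qed

lemma pair_rev_le_1: "pair_rev T p \<le> 1"
  by (induction T p rule: pair_rev.induct) (auto simp: rev_split_def Let_def)

lemma pair_rev_Node_separated:
  assumes "distinct (leaves (Node l r))" "i \<in> set (leaves l)" "j \<in> set (leaves r)"
  shows "pair_rev (Node l r) {i, j} = rev_split (set (leaves l)) (set (leaves r)) i j"
proof -
  have "(THE a. a \<in> {i, j} \<inter> set (leaves l)) = i" "(THE b. b \<in> {i, j} \<inter> set (leaves r)) = j"
    using assms by auto
  moreover have "\<not> {i, j} \<subseteq> set (leaves l)" "\<not> {i, j} \<subseteq> set (leaves r)"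
    using assms by auto
  ultimately show ?thesis
    by (simp only: pair_rev.simps if_False)
qed

lemma rev_split_eq_1_if_gen_ok:
  assumes "gen_ok (WNode w l r)" "i \<in> set (leaves (forget l))" "j \<in> set (leaves (forget r))"
  shows "rev_split (set (leaves (forget l))) (set (leaves (forget r))) i j = 1"
proof (rule rev_split_eq_1)
  have gen: "gen_ok l" "gen_ok r" "wt l \<le> w" "wt r \<le> w" and dist_ij: "dist i j = w"
    using assms by auto
  have "dist i (centroid (set (leaves (forget l)))) \<le> w"
    using dist_le_wt_if_gen_ok[OF gen(1) assms(2)] gen(3) assms(2)
    by (intro dist_centroid_le) force+
  moreover have "dist j (centroid (set (leaves (forget r)))) \<le> w"
    using dist_le_wt_if_gen_ok[OF gen(2) assms(3)] gen(4) assms(3)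
    by (intro dist_centroid_le) force+
  ultimately show "max (dist i (centroid (set (leaves (forget l)))))
      (dist j (centroid (set (leaves (forget r))))) \<le> dist i j"
    using dist_ij by simp
qed

lemma pair_rev_eq_1_if_gen_ok:
  assumes "gen_ok T" "distinct (leaves (forget T))"
    and "i \<in> set (leaves (forget T))" "j \<in> set (leaves (forget T))" "i \<noteq> j"
  shows "pair_rev (forget T) {i, j} = 1"
  using assms
proof (induction T arbitrary: i j)
  case (WLeaf z)
  then show ?case by simp
next
  case (WNode w l r)
  let ?L = "set (leaves (forget l))" and ?R = "set (leaves (forget r))"
  have separated: "pair_rev (forget (WNode w l r)) {a, b} = 1" if "a \<in> ?L" "b \<in> ?R" for a b
    using that WNode.prems(1,2)
    by (simp only: forget.simps pair_rev_Node_separated rev_split_eq_1_if_gen_ok)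
  have disjoint: "?L \<inter> ?R = {}"
    using WNode.prems(2) by auto
  consider "i \<in> ?L" "j \<in> ?L" | "i \<in> ?R" "j \<in> ?R" | "i \<in> ?L" "j \<in> ?R" | "i \<in> ?R" "j \<in> ?L"
    using WNode.prems(3,4) by auto
  then show ?case
  proof cases
    case 1
    then show ?thesis using WNode by simp
  next
    case 2
    then show ?thesis using WNode disjoint by auto
  next
    case 3
    then show ?thesis using separated by simp
  next
    case 4
    then show ?thesis using separated[of j i] by (simp add: insert_commute)
  qed
qed

lemma card_pairs: "finite V \<Longrightarrow> card {p. p \<subseteq> V \<and> card p = 2} = card V choose 2"
  by (simp add: n_subsets)

lemma revenue_le: "revenue T \<le> real (card (set (leaves T)) choose 2)"
proof -
  have "revenue T \<le> (\<Sum>p\<in>{p. p \<subseteq> set (leaves T) \<and> card p = 2}. 1)"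
    unfolding revenue_def by (intro sum_mono pair_rev_le_1)
  then show ?thesis
    by (simp add: card_pairs)
qed

lemma revenue_eq_if_pair_rev_eq_1:
  assumes "\<And>i j. i \<in> set (leaves T) \<Longrightarrow> j \<in> set (leaves T) \<Longrightarrow> i \<noteq> j \<Longrightarrow> pair_rev T {i, j} = 1"
  shows "revenue T = real (card (set (leaves T)) choose 2)"
proof -
  have "revenue T = (\<Sum>p\<in>{p. p \<subseteq> set (leaves T) \<and> card p = 2}. 1)"
    unfolding revenue_def using assms by (intro sum.cong) (auto simp: card_2_iff)
  then show ?thesis
    by (simp add: card_pairs)
qed

theorem mainTheorem10:
  fixes V :: "'a::euclidean_space set" and T :: "'a wtree"
  assumes "finite V"
    and "ultrametric_on V"
    and "generating_tree V T"
  shows "(\<forall>i\<in>V. \<forall>j\<in>V. i \<noteq> j \<longrightarrow> pair_rev (forget T) {i, j} = 1)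
       \<and> revenue (forget T) = real (card V choose 2)
       \<and> (\<forall>T'. hc_tree V T' \<longrightarrow> revenue T' \<le> revenue (forget T))"
proof -
  have gen: "gen_ok T" "distinct (leaves (forget T))" and leaves_T: "set (leaves (forget T)) = V"
    using assms(3) by (auto simp: generating_tree_def hc_tree_def)
  have rev_1: "\<forall>i\<in>V. \<forall>j\<in>V. i \<noteq> j \<longrightarrow> pair_rev (forget T) {i, j} = 1"
    using pair_rev_eq_1_if_gen_ok[OF gen] leaves_T by blast
  then have rev_T: "revenue (forget T) = real (card V choose 2)"
    using revenue_eq_if_pair_rev_eq_1[of "forget T"] leaves_T by simp
  have "revenue T' \<le> revenue (forget T)" if "hc_tree V T'" for T'
    using revenue_le[of T'] that rev_T by (simp add: hc_tree_def)
  with rev_1 rev_T show ?thesis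
    by blast
qed

end
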